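(* Let $D=(E,\mathcal{F})$ be a delta-matroid and let $e_1,e_2\in E$ with $e_1\neq e_2$. Then the primal type of $e_2$ in $D-e_1$ is the same as its primal type in $D$.
   Context: A delta-matroid is a pair $D=(E,\mathcal{F})$ with $E$ finite, $\mathcal{F}$ a nonempty collection of subsets of $E$ (feasible sets), such that for all $X,Y\in\mathcal{F}$ and $u\in X\Delta Y$ there is $v\in X\Delta Y$ (possibly $v=u$) with $X\Delta\{u,v\}\in\mathcal{F}$. The twist by $A\subseteq E$ is $D*A=(E,\{A\Delta X:X\in\mathcal{F}\})$. An element $e$ is a coloop if it lies in every feasible set. The deletion $D-e$ is $(E-e,\{F\in\mathcal{F}: e\notin F\})$ if $e$ is not a coloop, and $(E-e,\{F-e: F\in\mathcal{F}\})$ if $e$ is a coloop. Let $\mathcal{F}_{\min}(D)$ be the set of minimum-cardinality feasible sets. An element $e$ is a ribbon loop if $e$ lies in no member of $\mathcal{F}_{\min}(D)$; a ribbon loop $e$ is non-orientable if it is still a ribbon loop in $D*e$, and orientable otherwise. The primal type of $e$ in $D$ is $p$ if $e$ is not a ribbon loop, $u$ if it is an orientable ribbon loop, and $t$ if it is a non-orientable ribbon loop. *)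

theory Defs
  imports Main
begin

definition sdiff :: "'a set \<Rightarrow> 'a set \<Rightarrow> 'a set" (infixl "\<triangle>" 65) where
  "X \<triangle> Y = (X - Y) \<union> (Y - X)"

type_synonym 'a setsystem = "'a set \<times> 'a set set"

definition delta_matroid :: "'a setsystem \<Rightarrow> bool" where
  "delta_matroid D \<longleftrightarrow>
     (let E = fst D; F = snd D in
       finite E \<and> F \<noteq> {} \<and> (\<forall>X\<in>F. X \<subseteq> E) \<and>
       (\<forall>X\<in>F. \<forall>Y\<in>F. \<forall>u\<in>X \<triangle> Y. \<exists>v\<in>X \<triangle> Y. X \<triangle> {u, v} \<in> F))"

definition twist :: "'a setsystem \<Rightarrow> 'a set \<Rightarrow> 'a setsystem" where
  "twist D A = (fst D, (\<lambda>X. A \<triangle> X) ` snd D)"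

definition coloop :: "'a setsystem \<Rightarrow> 'a \<Rightarrow> bool" where
  "coloop D e \<longleftrightarrow> (\<forall>X\<in>snd D. e \<in> X)"

definition deletion :: "'a setsystem \<Rightarrow> 'a \<Rightarrow> 'a setsystem" where
  "deletion D e =
     (if coloop D e then (fst D - {e}, (\<lambda>X. X - {e}) ` snd D)
      else (fst D - {e}, {X \<in> snd D. e \<notin> X}))"

definition Fmin :: "'a setsystem \<Rightarrow> 'a set set" where
  "Fmin D = {X \<in> snd D. \<forall>Y\<in>snd D. card X \<le> card Y}"

definition ribbon_loop :: "'a setsystem \<Rightarrow> 'a \<Rightarrow> bool" where
  "ribbon_loop D e \<longleftrightarrow> (\<forall>X\<in>Fmin D. e \<notin> X)"

datatype ptype = P | U | T

definition primal_type :: "'a setsystem \<Rightarrow> 'a \<Rightarrow> ptype" where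
  "primal_type D e =
     (if \<not> ribbon_loop D e then P
      else if ribbon_loop (twist D {e}) e then T
      else U)"

end

theory Submission
  imports Defs
begin

text \<open>If \<open>e\<^sub>1\<close> is a
  coloop, all cardinalities drop by one, so the minimum feasible sets of \<open>D - e\<^sub>1\<close> are those of
  \<open>D\<close> with \<open>e\<^sub>1\<close> removed. Otherwise the symmetric exchange between a minimum feasible set
  \<open>X \<ni> e\<^sub>1\<close> and a feasible \<open>Y \<not>\<ni> e\<^sub>1\<close> replaces \<open>e\<^sub>1\<close> by some \<open>v \<in> Y - X\<close> (dropping a
  second element would contradict minimality). Hence the minimum feasible sets of \<open>D - e\<^sub>1\<close> are
  those of \<open>D\<close> avoiding \<open>e\<^sub>1\<close>, and every other element of a minimum feasible set of \<open>D\<close> lies in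
  one of them. Either way \<open>e\<^sub>2\<close> is a ribbon loop of \<open>D - e\<^sub>1\<close> iff it is one of \<open>D\<close>. Twisting by
  \<open>{e\<^sub>2}\<close> preserves the exchange axiom and commutes with deleting \<open>e\<^sub>1\<close>, so the same applies to
  \<open>D * e\<^sub>2\<close>, which decides orientability.\<close>

definition symmetric_exchange :: "'a set set \<Rightarrow> bool" where
  "symmetric_exchange F \<longleftrightarrow> (\<forall>X\<in>F. \<forall>Y\<in>F. \<forall>u\<in>X \<triangle> Y. \<exists>v\<in>X \<triangle> Y. X \<triangle> {u, v} \<in> F)"

lemma delta_matroid_symmetric_exchange: "delta_matroid (E, F) \<Longrightarrow> symmetric_exchange F"
  unfolding delta_matroid_def symmetric_exchange_def by simp

lemma delta_matroid_finite_feasible: "delta_matroid (E, F) \<Longrightarrow> X \<in> F \<Longrightarrow> finite X"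
  unfolding delta_matroid_def by (auto intro: finite_subset[of X E])

lemma sdiff_sdiff_cancel_left: "(A \<triangle> X) \<triangle> (A \<triangle> Y) = X \<triangle> Y"
  by (auto simp: sdiff_def)

lemma sdiff_assoc: "(A \<triangle> X) \<triangle> B = A \<triangle> (X \<triangle> B)"
  by (auto simp: sdiff_def)

lemma symmetric_exchange_twist:
  assumes "symmetric_exchange F"
  shows "symmetric_exchange ((\<triangle>) A ` F)"
  unfolding symmetric_exchange_def
proof (intro ballI)
  fix X' Y' u
  assume "X' \<in> (\<triangle>) A ` F" "Y' \<in> (\<triangle>) A ` F" and u: "u \<in> X' \<triangle> Y'"
  then obtain X Y where XY: "X \<in> F" "Y \<in> F" "X' = A \<triangle> X" "Y' = A \<triangle> Y"
    by blast
  with u have "u \<in> X \<triangle> Y"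
    by (simp add: sdiff_sdiff_cancel_left)
  with assms XY obtain v where "v \<in> X \<triangle> Y" "X \<triangle> {u, v} \<in> F"
    unfolding symmetric_exchange_def by blast
  moreover have "X' \<triangle> {u, v} = A \<triangle> (X \<triangle> {u, v})"
    using XY(3) by (rule ssubst) (rule sdiff_assoc)
  ultimately show "\<exists>v\<in>X' \<triangle> Y'. X' \<triangle> {u, v} \<in> (\<triangle>) A ` F"
    using XY by (auto simp: sdiff_sdiff_cancel_left)
qed

lemma twist_deletion_commute:
  assumes "e \<notin> A"
  shows "twist (deletion (E, F) e) A = deletion (twist (E, F) A) e"
proof -
  have coloop_twist: "coloop (twist (E, F) A) e \<longleftrightarrow> coloop (E, F) e"
    using assms by (auto simp: coloop_def twist_def sdiff_def)
  have "(\<triangle>) A ` (\<lambda>X. X - {e}) ` F = (\<lambda>X. X - {e}) ` (\<triangle>) A ` F"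
    unfolding image_image using assms by (intro image_cong) (auto simp: sdiff_def)
  moreover have "(\<triangle>) A ` {X \<in> F. e \<notin> X} = {X \<in> (\<triangle>) A ` F. e \<notin> X}"
    using assms by (auto simp: sdiff_def)
  ultimately show ?thesis
    using coloop_twist by (simp add: deletion_def twist_def)
qed

lemma Fmin_image_card_order_preserving:
  assumes "\<And>X Y. X \<in> F \<Longrightarrow> Y \<in> F \<Longrightarrow> card (g X) \<le> card (g Y) \<longleftrightarrow> card X \<le> card Y"
  shows "Fmin (E', g ` F) = g ` Fmin (E, F)"
proof (intro equalityI subsetI)
  fix Z assume "Z \<in> Fmin (E', g ` F)"
  then obtain X where "X \<in> F" "Z = g X" "\<forall>Y\<in>F. card (g X) \<le> card (g Y)"
    by (auto simp: Fmin_def)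
  with assms show "Z \<in> g ` Fmin (E, F)"
    by (auto simp: Fmin_def)
next
  fix Z assume "Z \<in> g ` Fmin (E, F)"
  then obtain X where "X \<in> F" "Z = g X" "\<forall>Y\<in>F. card X \<le> card Y"
    by (auto simp: Fmin_def)
  with assms show "Z \<in> Fmin (E', g ` F)"
    by (auto simp: Fmin_def)
qed

lemma Fmin_Diff_coloop:
  assumes "\<And>X. X \<in> F \<Longrightarrow> finite X \<and> e \<in> X"
  shows "Fmin (E', (\<lambda>X. X - {e}) ` F) = (\<lambda>X. X - {e}) ` Fmin (E, F)"
proof (rule Fmin_image_card_order_preserving)
  fix X Y assume "X \<in> F" "Y \<in> F"
  with assms have "card X > 0" "card Y > 0"
    by (auto simp: card_gt_0_iff)
  with assms \<open>X \<in> F\<close> \<open>Y \<in> F\<close> show "card (X - {e}) \<le> card (Y - {e}) \<longleftrightarrow> card X \<le> card Y"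
    by (simp add: card_Diff_singleton) arith
qed

lemma Fmin_exchange:
  assumes "symmetric_exchange F" and "\<And>X. X \<in> F \<Longrightarrow> finite X"
    and X: "X \<in> Fmin (E, F)" "e \<in> X" and Y: "Y \<in> F" "e \<notin> Y"
  obtains v where "v \<in> Y - X" "insert v (X - {e}) \<in> Fmin (E, F)"
proof -
  have X_min: "X \<in> F" "\<And>W. W \<in> F \<Longrightarrow> card X \<le> card W"
    using X by (simp_all add: Fmin_def)
  have "finite X"
    using X_min(1) by (rule assms(2))
  have "e \<in> X \<triangle> Y"
    using X Y by (auto simp: sdiff_def)
  with assms(1) X_min(1) Y(1) obtain v where v: "v \<in> X \<triangle> Y" "X \<triangle> {e, v} \<in> F"
    unfolding symmetric_exchange_def by blast
  have "v \<in> Y - X"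
  proof (rule ccontr)
    assume "v \<notin> Y - X"
    with v have "v \<in> X" "X \<triangle> {e, v} = X - {e, v}"
      using X(2) by (auto simp: sdiff_def)
    moreover have "card (X - {e, v}) < card X"
      using \<open>finite X\<close> X(2) by (intro psubset_card_mono) auto
    ultimately show False
      using X_min(2) v(2) by (metis leD)
  qed
  have swap: "X \<triangle> {e, v} = insert v (X - {e})"
    using \<open>v \<in> Y - X\<close> X(2) by (auto simp: sdiff_def)
  have "card (insert v (X - {e})) = Suc (card (X - {e}))"
    using \<open>finite X\<close> \<open>v \<in> Y - X\<close> by (intro card_insert_disjoint) auto
  also have "\<dots> = card X"
    using \<open>finite X\<close> X(2) by (rule card_Suc_Diff1)
  finally have "insert v (X - {e}) \<in> Fmin (E, F)"
    using v(2) X_min(2) unfolding Fmin_def swap by simp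
  with \<open>v \<in> Y - X\<close> show ?thesis
    by (rule that)
qed

lemma obtain_Fmin:
  assumes "Y \<in> F"
  obtains X where "X \<in> Fmin (E, F)"
proof -
  obtain X where "X \<in> F" "\<forall>W. W \<in> F \<longrightarrow> card X \<le> card W"
    using ex_has_least_nat[of "\<lambda>X. X \<in> F" Y card] assms by blast
  then have "X \<in> Fmin (E, F)"
    by (simp add: Fmin_def)
  then show ?thesis
    by (rule that)
qed

lemma Fmin_avoid:
  assumes "symmetric_exchange F" and "\<And>X. X \<in> F \<Longrightarrow> finite X"
    and X: "X \<in> Fmin (E, F)" and Y: "Y \<in> F" "e \<notin> Y"
  obtains X' where "X' \<in> Fmin (E, F)" "e \<notin> X'" "X - {e} \<subseteq> X'"
proof (cases "e \<in> X")
  case True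
  obtain v where v: "v \<in> Y - X" "insert v (X - {e}) \<in> Fmin (E, F)"
    by (rule Fmin_exchange[OF assms(1,2) X True Y])
  have "e \<notin> insert v (X - {e})" "X - {e} \<subseteq> insert v (X - {e})"
    using v(1) Y(2) by auto
  with v(2) show ?thesis
    by (rule that)
next
  case False
  with X show ?thesis
    by (intro that) auto
qed

lemma Fmin_filter_noncoloop:
  assumes "symmetric_exchange F" and "\<And>X. X \<in> F \<Longrightarrow> finite X" and "Y \<in> F" "e \<notin> Y"
  shows "Fmin (E', {X \<in> F. e \<notin> X}) = {X \<in> Fmin (E, F). e \<notin> X}"
proof (intro equalityI subsetI)
  fix Z assume "Z \<in> Fmin (E', {X \<in> F. e \<notin> X})"
  then have Z: "Z \<in> F" "e \<notin> Z" "\<And>V. V \<in> F \<Longrightarrow> e \<notin> V \<Longrightarrow> card Z \<le> card V"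
    by (auto simp: Fmin_def)
  obtain X where X: "X \<in> Fmin (E, F)"
    using assms(3) by (rule obtain_Fmin)
  obtain W where "W \<in> Fmin (E, F)" "e \<notin> W" "X - {e} \<subseteq> W"
    by (rule Fmin_avoid[OF assms(1,2) X assms(3,4)])
  then have W: "W \<in> F" "\<And>V. V \<in> F \<Longrightarrow> card W \<le> card V" "e \<notin> W"
    by (simp_all add: Fmin_def)
  have "card Z \<le> card V" if "V \<in> F" for V
    using Z(3)[OF W(1,3)] W(2)[OF that] by (rule le_trans)
  with Z(1,2) show "Z \<in> {X \<in> Fmin (E, F). e \<notin> X}"
    by (simp add: Fmin_def)
qed (auto simp: Fmin_def)

lemma ribbon_loop_filter_noncoloop:
  assumes "symmetric_exchange F" and "\<And>X. X \<in> F \<Longrightarrow> finite X" and "Y \<in> F" "e \<notin> Y"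
    and "e \<noteq> f"
  shows "ribbon_loop (E', {X \<in> F. e \<notin> X}) f \<longleftrightarrow> ribbon_loop (E, F) f"
proof -
  have Fmin_filter: "Fmin (E', {X \<in> F. e \<notin> X}) = {X \<in> Fmin (E, F). e \<notin> X}"
    by (rule Fmin_filter_noncoloop[OF assms(1-4)])
  have "\<exists>X'\<in>Fmin (E, F). e \<notin> X' \<and> f \<in> X'" if X: "X \<in> Fmin (E, F)" "f \<in> X" for X
  proof -
    obtain X' where "X' \<in> Fmin (E, F)" "e \<notin> X'" "X - {e} \<subseteq> X'"
      by (rule Fmin_avoid[OF assms(1,2) X(1) assms(3,4)])
    with X(2) assms(5) show ?thesis
      by blast
  qed
  then show ?thesis
    unfolding ribbon_loop_def Fmin_filter by blast
qed

lemma ribbon_loop_deletion: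
  assumes "symmetric_exchange F" and "\<And>X. X \<in> F \<Longrightarrow> finite X" and "e \<noteq> f"
  shows "ribbon_loop (deletion (E, F) e) f \<longleftrightarrow> ribbon_loop (E, F) f"
proof (cases "coloop (E, F) e")
  case True
  then have "Fmin (E - {e}, (\<lambda>X. X - {e}) ` F) = (\<lambda>X. X - {e}) ` Fmin (E, F)"
    using assms(2) by (intro Fmin_Diff_coloop) (simp add: coloop_def)
  with True assms(3) show ?thesis
    by (simp add: deletion_def ribbon_loop_def)
next
  case False
  then obtain Y where "Y \<in> F" "e \<notin> Y"
    by (auto simp: coloop_def)
  with False ribbon_loop_filter_noncoloop[OF assms(1,2) this assms(3)] show ?thesis
    by (simp add: deletion_def)
qed

theorem lemma3:
  fixes E :: "'a set" and F :: "'a set set" and e1 e2 :: 'a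
  assumes "delta_matroid (E, F)"
    and "e1 \<in> E" and "e2 \<in> E" and "e1 \<noteq> e2"
  shows "primal_type (deletion (E, F) e1) e2 = primal_type (E, F) e2"
proof -
  have exchange: "symmetric_exchange F"
    using assms(1) by (rule delta_matroid_symmetric_exchange)
  have finite: "\<And>X. X \<in> F \<Longrightarrow> finite X"
    using assms(1) by (rule delta_matroid_finite_feasible)
  then have finite_twist: "\<And>X. X \<in> (\<triangle>) {e2} ` F \<Longrightarrow> finite X"
    by (auto simp: sdiff_def)
  have twist: "twist (E, F) {e2} = (E, (\<triangle>) {e2} ` F)"
    by (simp add: twist_def)
  have "twist (deletion (E, F) e1) {e2} = deletion (E, (\<triangle>) {e2} ` F) e1"
    using assms(4) by (simp add: twist_deletion_commute twist)
  then show ?thesis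
    unfolding primal_type_def twist
    using ribbon_loop_deletion[OF exchange finite assms(4)]
      ribbon_loop_deletion[OF symmetric_exchange_twist[OF exchange] finite_twist assms(4)]
    by simp
qed

end
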